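(* Let $R\in\{\mathrm{ML},\mathrm{wML},\mathrm{C},\mathrm{S}\}$, let $p,q\in[0,1]$ be real numbers with $p<q$, let $I\in\mathscr I$ be an interval forecast with $I\subseteq(0,1)$, let $\mathscr S$ be a countable set of selection processes with $\mathscr S\supseteq\mathscr S^{p,q}_{\mathscr F_R}$, and let $\varpi\in\Omega$ be a path that is $\mathscr S$-random for $I$. Then a path $\omega\in\Omega$ is $R$-random for $\varphi^{\varpi}_{p,q}$ if and only if it is $R$-random for $[p,q]$.
   Context: Notation: $\mathbb N=\{1,2,\dots\}$, $\mathbb N_0=\mathbb N\cup\{0\}$. $\Omega=\{0,1\}^{\mathbb N}$ is the set of paths $\omega=(\omega_1,\omega_2,\dots)$; $\omega_{1:n}=(\omega_1,\dots,\omega_n)$ and $\omega_{1:0}=\square$ (the empty sequence). $\mathbb S=\bigcup_{n\in\mathbb N_0}\{0,1\}^n$ is the set of situations, $|s|$ the length of $s$, $sx$ the concatenation. $\mathscr I$ is the set of closed intervals $I\subseteq[0,1]$ (singletons $[r,r]$ are identified with $r$). For $r\in[0,1]$ and $f:\{0,1\}\to\mathbb R$, $E_r(f)=rf(1)+(1-r)f(0)$; for $I\in\mathscr I$, $\overline E_I(f)=\max_{r\in I}E_r(f)$. A forecasting system is a map $\varphi:\mathbb S\to\mathscr I$; $\underline\varphi(s)=\min\varphi(s)$, $\overline\varphi(s)=\max\varphi(s)$; a stationary (constant) forecasting system with value $I$ is identified with $I$. A real process is a map $F:\mathbb S\to\mathbb R$; $\Delta F(s)$ is the function $x\mapsto F(sx)-F(s)$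 on $\{0,1\}$. $M$ is a supermartingale for $\varphi$ if $\overline E_{\varphi(s)}(\Delta M(s))\le0$ for all $s\in\mathbb S$. A test process is a non-negative real process $F$ with $F(\square)=1$; a test supermartingale for $\varphi$ is a test process that is a supermartingale for $\varphi$. A multiplier process $D$ assigns to each $s\in\mathbb S$ a function $D(s):\{0,1\}\to[0,\infty)$; it generates the test process $F$ with $F(\square)=1$ and $F(sx)=F(s)D(s)(x)$. Computability: a map from a countable effectively encoded domain $\mathscr D$ (e.g. $\mathbb N_0$, $\mathbb S$, $\mathbb S\times\mathbb N_0$, $\mathbb S\times\{0,1\}\times\mathbb N_0$) to $\mathbb N_0$ or $\mathbb Q$ is recursive if it is computable by a Turing machine. A real map $r$ on $\mathscr D$ is lower semicomputable if there is a recursive rational map $q$ on $\mathscr D\times\mathbb N_0$ with $q(d,n)\le q(d,n+1)$ and $r(d)=\lim_n q(d,n)$ for all $d,n$; it is computable if there is a recursive rational $q$ with $|r(d)-q(d,n)|<2^{-n}$ for all $d,n$. A multiplier process is lower semicomputable if $(s,x)\mapsto D(s)(x)$ is. $\mathscr F_{\mathrm{ML}}$ is the set of lower semicomputable test processes, $\mathscr F_{\mathrm{wML}}$ the set of test processes generated by lower semicomputable multiplier processes, and $\mathscr F_{\mathrm C}=\mathscr F_{\mathrm S}$ the set of positive, rational-valued, recursive test processes. For $R\in\{\mathrm{ML},\mathrm{wML},\mathrm C,\mathrm S\}$, $\overline{\mathbb T}_R(\varphi)$ is the set of elements of $\mathscr F_R$ that are test supermartingales for $\varphi$. For $R\in\{\mathrm{ML},\mathrm{wML},\mathrm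 C\}$, a path $\omega$ is $R$-random for $\varphi$ if no $T\in\overline{\mathbb T}_R(\varphi)$ has $\limsup_{n\to\infty}T(\omega_{1:n})=\infty$. A real growth function is a computable, non-decreasing, unbounded map $\tau:\mathbb N_0\to[0,\infty)$; $\omega$ is S-random for $\varphi$ if there are no $T\in\overline{\mathbb T}_{\mathrm S}(\varphi)$ and real growth function $\tau$ with $\limsup_{n\to\infty}[T(\omega_{1:n})-\tau(n)]\ge0$. $R$-random for $I\in\mathscr I$ means $R$-random for the stationary forecasting system with value $I$. Selection processes: a selection process is a map $S:\mathbb S\to\{0,1\}$; it is temporal if $S(s)$ depends only on $|s|$ (written $S(n)$). For a countable set $\mathscr S$ of selection processes, a path $\omega$ is $\mathscr S$-random for $\varphi$ if for every $S\in\mathscr S$ with $\lim_{n}\sum_{k=0}^{n-1}S(\omega_{1:k})=\infty$ we have $\liminf_{n}\frac{\sum_{k=0}^{n-1}S(\omega_{1:k})[\omega_{k+1}-\underline\varphi(\omega_{1:k})]}{\sum_{k=0}^{n-1}S(\omega_{1:k})}\ge0$ and $\limsup_{n}\frac{\sum_{k=0}^{n-1}S(\omega_{1:k})[\omega_{k+1}-\overline\varphi(\omega_{1:k})]}{\sum_{k=0}^{n-1}S(\omega_{1:k})}\le0$. Special objects: for a real process $F$ and $r\in[0,1]$, $S^r_F$ is the temporal selection process with $S^r_F(n)=1$ if $E_r(\Delta F(s))>0$ for some $s$ with $|s|=n$, and $S^r_F(n)=0$ otherwise. For a countable set $\mathscr F$ of real processes, $\mathscr S^{p,q}_{\mathscr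 F}=\{S^r_F: F\in\mathscr F,\ r\in\{p,q\}\}$. For $p,q\in[0,1]$ and $\varpi\in\Omega$, $\varphi^\varpi_{p,q}$ is the precise forecasting system with $\varphi^\varpi_{p,q}(s)=p$ if $\varpi_{|s|+1}=0$ and $\varphi^\varpi_{p,q}(s)=q$ if $\varpi_{|s|+1}=1$. *)

theory Defs
  imports "HOL-Analysis.Analysis" "HOL-Library.Nat_Bijection"
begin

text \<open>recfn n g: g is a total recursive function of arity n (arguments given as a list).
  By the Church-Turing thesis (Kleene), these are exactly the Turing-computable total functions.\<close>

inductive recfn :: "nat \<Rightarrow> (nat list \<Rightarrow> nat) \<Rightarrow> bool" where
  rzero: "recfn n (\<lambda>_. 0)"
| rsucc: "recfn 1 (\<lambda>xs. Suc (hd xs))"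
| rproj: "i < n \<Longrightarrow> recfn n (\<lambda>xs. xs ! i)"
| rcomp: "recfn m f \<Longrightarrow> length gs = m \<Longrightarrow> (\<forall>g\<in>set gs. recfn n g)
           \<Longrightarrow> recfn n (\<lambda>xs. f (map (\<lambda>g. g xs) gs))"
| rprim: "recfn n f \<Longrightarrow> recfn (Suc (Suc n)) g
           \<Longrightarrow> recfn (Suc n) (\<lambda>xs. rec_nat (f (tl xs)) (\<lambda>y r. g (r # y # tl xs)) (hd xs))"
| rmu: "recfn (Suc n) f \<Longrightarrow> (\<forall>xs. length xs = n \<longrightarrow> (\<exists>y. f (y # xs) = 0))
           \<Longrightarrow> recfn n (\<lambda>xs. LEAST y. f (y # xs) = 0)"

primrec enc_sit :: "bool list \<Rightarrow> nat" where
  "enc_sit [] = 0"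
| "enc_sit (b # s) = 2 * enc_sit s + (if b then 2 else 1)"

definition enc_pair :: "('a \<Rightarrow> nat) \<Rightarrow> ('b \<Rightarrow> nat) \<Rightarrow> 'a \<times> 'b \<Rightarrow> nat" where
  "enc_pair e1 e2 = (\<lambda>(x, y). prod_encode (e1 x, e2 y))"

definition enc_bool :: "bool \<Rightarrow> nat" where
  "enc_bool b = (if b then 1 else 0)"

definition recursive_nat :: "('d \<Rightarrow> nat) \<Rightarrow> ('d \<Rightarrow> nat) \<Rightarrow> bool" where
  "recursive_nat enc f \<longleftrightarrow> (\<exists>g. recfn 1 g \<and> (\<forall>d. f d = g [enc d]))"

text \<open>A rational map (values stored as reals) is recursive if numerator/denominator data are.\<close>
definition recursive_rat :: "('d \<Rightarrow> nat) \<Rightarrow> ('d \<Rightarrow> real) \<Rightarrow> bool" where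
  "recursive_rat enc f \<longleftrightarrow> (\<exists>a b c. recursive_nat enc a \<and> recursive_nat enc b \<and> recursive_nat enc c \<and>
      (\<forall>d. f d = (real (a d) - real (b d)) / real (Suc (c d))))"

definition lower_semicomputable :: "('d \<Rightarrow> nat) \<Rightarrow> ('d \<Rightarrow> real) \<Rightarrow> bool" where
  "lower_semicomputable enc r \<longleftrightarrow> (\<exists>q. recursive_rat (enc_pair enc id) q \<and>
      (\<forall>d n. q (d, n) \<le> q (d, Suc n)) \<and> (\<forall>d. (\<lambda>n. q (d, n)) \<longlonglongrightarrow> r d))"

definition computable_real :: "('d \<Rightarrow> nat) \<Rightarrow> ('d \<Rightarrow> real) \<Rightarrow> bool" where
  "computable_real enc r \<longleftrightarrow> (\<exists>q. recursive_rat (enc_pair enc id) q \<and>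
      (\<forall>d n. \<bar>r d - q (d, n)\<bar> < 1 / 2 ^ n))"

text \<open>Situations are bool lists (True = 1, False = 0); paths are nat \<Rightarrow> bool with
  omega 0 = omega_1; an interval [a,b] is the pair (a,b).\<close>

definition prefix :: "(nat \<Rightarrow> bool) \<Rightarrow> nat \<Rightarrow> bool list" where
  "prefix \<omega> n = map \<omega> [0..<n]"

definition Ex_r :: "real \<Rightarrow> (bool \<Rightarrow> real) \<Rightarrow> real" where
  "Ex_r r f = r * f True + (1 - r) * f False"

definition Eup :: "real \<times> real \<Rightarrow> (bool \<Rightarrow> real) \<Rightarrow> real" where
  "Eup I f = Sup ((\<lambda>r. Ex_r r f) ` {fst I..snd I})"

definition dproc :: "(bool list \<Rightarrow> real) \<Rightarrow> bool list \<Rightarrow> bool \<Rightarrow> real" where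
  "dproc F s = (\<lambda>x. F (s @ [x]) - F s)"

definition supermartingale :: "(bool list \<Rightarrow> real \<times> real) \<Rightarrow> (bool list \<Rightarrow> real) \<Rightarrow> bool" where
  "supermartingale \<phi> M \<longleftrightarrow> (\<forall>s. Eup (\<phi> s) (dproc M s) \<le> 0)"

definition test_process :: "(bool list \<Rightarrow> real) \<Rightarrow> bool" where
  "test_process F \<longleftrightarrow> (\<forall>s. F s \<ge> 0) \<and> F [] = 1"

definition generated :: "(bool list \<Rightarrow> bool \<Rightarrow> real) \<Rightarrow> bool list \<Rightarrow> real" where
  "generated D s = (\<Prod>k<length s. D (take k s) (s ! k))"

datatype rtype = R_ML | R_wML | R_C | R_S

definition F_ML :: "(bool list \<Rightarrow> real) set" where
  "F_ML = {F. test_process F \<and> lower_semicomputable enc_sit F}"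

definition F_wML :: "(bool list \<Rightarrow> real) set" where
  "F_wML = {generated D | D. (\<forall>s x. D s x \<ge> 0) \<and>
      lower_semicomputable (enc_pair enc_sit enc_bool) (\<lambda>(s, x). D s x)}"

definition F_C :: "(bool list \<Rightarrow> real) set" where
  "F_C = {F. test_process F \<and> (\<forall>s. F s > 0) \<and> recursive_rat enc_sit F}"

fun Fset :: "rtype \<Rightarrow> (bool list \<Rightarrow> real) set" where
  "Fset R_ML = F_ML"
| "Fset R_wML = F_wML"
| "Fset R_C = F_C"
| "Fset R_S = F_C"

definition Tbar :: "rtype \<Rightarrow> (bool list \<Rightarrow> real \<times> real) \<Rightarrow> (bool list \<Rightarrow> real) set" where
  "Tbar R \<phi> = {T \<in> Fset R. supermartingale \<phi> T}"

definition growth_function :: "(nat \<Rightarrow> real) \<Rightarrow> bool" where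
  "growth_function \<tau> \<longleftrightarrow> computable_real id \<tau> \<and> mono \<tau> \<and> (\<forall>n. \<tau> n \<ge> 0) \<and> \<not> bdd_above (range \<tau>)"

definition random :: "rtype \<Rightarrow> (bool list \<Rightarrow> real \<times> real) \<Rightarrow> (nat \<Rightarrow> bool) \<Rightarrow> bool" where
  "random R \<phi> \<omega> = (if R = R_S then
      \<not> (\<exists>T\<in>Tbar R_S \<phi>. \<exists>\<tau>. growth_function \<tau> \<and>
            limsup (\<lambda>n. ereal (T (prefix \<omega> n) - \<tau> n)) \<ge> 0)
    else \<not> (\<exists>T\<in>Tbar R \<phi>. limsup (\<lambda>n. ereal (T (prefix \<omega> n))) = \<infinity>))"

definition sel_random :: "(bool list \<Rightarrow> bool) set \<Rightarrow> (bool list \<Rightarrow> real \<times> real) \<Rightarrow> (nat \<Rightarrow> bool) \<Rightarrow> bool" where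
  "sel_random \<SS> \<phi> \<omega> \<longleftrightarrow> (\<forall>Sel\<in>\<SS>.
     filterlim (\<lambda>n. \<Sum>k<n. of_bool (Sel (prefix \<omega> k)) :: real) at_top sequentially \<longrightarrow>
     (liminf (\<lambda>n. ereal ((\<Sum>k<n. of_bool (Sel (prefix \<omega> k)) * (of_bool (\<omega> k) - fst (\<phi> (prefix \<omega> k))))
                      / (\<Sum>k<n. of_bool (Sel (prefix \<omega> k))))) \<ge> 0 \<and>
      limsup (\<lambda>n. ereal ((\<Sum>k<n. of_bool (Sel (prefix \<omega> k)) * (of_bool (\<omega> k) - snd (\<phi> (prefix \<omega> k))))
                      / (\<Sum>k<n. of_bool (Sel (prefix \<omega> k))))) \<le> 0))"

definition sel_temporal :: "real \<Rightarrow> (bool list \<Rightarrow> real) \<Rightarrow> bool list \<Rightarrow> bool" where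
  "sel_temporal r F s \<longleftrightarrow> (\<exists>t. length t = length s \<and> Ex_r r (dproc F t) > 0)"

definition sel_pq :: "real \<Rightarrow> real \<Rightarrow> (bool list \<Rightarrow> real) set \<Rightarrow> (bool list \<Rightarrow> bool) set" where
  "sel_pq p q FF = {sel_temporal r F | F r. F \<in> FF \<and> r \<in> {p, q}}"

definition phi_pq :: "(nat \<Rightarrow> bool) \<Rightarrow> real \<Rightarrow> real \<Rightarrow> bool list \<Rightarrow> real \<times> real" where
  "phi_pq \<pi> p q s = (if \<pi> (length s) then (q, q) else (p, p))"

end

theory Submission
  imports Defs
begin

(* Every supermartingale for [p, q] is one for the precise system phi, so randomness for phi
   implies randomness for [p, q].  Conversely, let T be a test supermartingale for phi that
   wins on omega.  Where phi forecasts p, T is a p-supermartingale, so the temporal selection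
   S^p_T only picks times n at which pi_(n+1) = 1; since pi is SS-random for an interval
   inside (0, 1), such a selection picks only finitely many times.  The same holds for S^q_T,
   so beyond some depth N the process T is a supermartingale for both p and q, hence for
   [p, q].  Keeping the capital at 1 until a situation w of depth > N on omega is reached
   and continuing with T / c afterwards (where T w <= c) gives a test supermartingale for
   [p, q] that equals T / c along omega from w on, so it wins whenever T does.  An integer c
   (or c = T w for multiplier processes) keeps the test in its computability class, and for
   S-randomness the growth function is divided by c as well. *)

section \<open>Total recursive functions\<close>

definition recursive_on :: "nat \<Rightarrow> (nat list \<Rightarrow> nat) \<Rightarrow> bool" where
  "recursive_on n h \<longleftrightarrow> (\<exists>g. recfn n g \<and> (\<forall>xs. length xs = n \<longrightarrow> g xs = h xs))"

definition recursive1 :: "(nat \<Rightarrow> nat) \<Rightarrow> bool" where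
  "recursive1 h \<longleftrightarrow> recursive_on 1 (\<lambda>xs. h (hd xs))"

definition recursive2 :: "(nat \<Rightarrow> nat \<Rightarrow> nat) \<Rightarrow> bool" where
  "recursive2 h \<longleftrightarrow> recursive_on 2 (\<lambda>xs. h (xs ! 0) (xs ! 1))"

definition recursive3 :: "(nat \<Rightarrow> nat \<Rightarrow> nat \<Rightarrow> nat) \<Rightarrow> bool" where
  "recursive3 h \<longleftrightarrow> recursive_on 3 (\<lambda>xs. h (xs ! 0) (xs ! 1) (xs ! 2))"

lemma recursive_on_cong:
  "recursive_on n f \<Longrightarrow> (\<And>xs. length xs = n \<Longrightarrow> f xs = g xs) \<Longrightarrow> recursive_on n g"
  unfolding recursive_on_def by metis

lemma recfn_imp_recursive_on: "recfn n g \<Longrightarrow> recursive_on n g"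
  unfolding recursive_on_def by blast

lemma recursive_on_proj: "i < n \<Longrightarrow> recursive_on n (\<lambda>xs. xs ! i)"
  by (rule recfn_imp_recursive_on) (rule recfn.rproj)

lemma recursive_on_comp:
  assumes f: "recursive_on m f" and len: "length gs = m" and gs: "\<forall>g\<in>set gs. recursive_on n g"
  shows "recursive_on n (\<lambda>xs. f (map (\<lambda>g. g xs) gs))"
proof -
  have "\<exists>gs'. length gs' = length gs \<and> (\<forall>g\<in>set gs'. recfn n g) \<and>
     (\<forall>xs. length xs = n \<longrightarrow> map (\<lambda>g. g xs) gs' = map (\<lambda>g. g xs) gs)"
    using gs
  proof (induction gs)
    case (Cons g gs)
    then obtain gs' where "length gs' = length gs" "\<forall>g\<in>set gs'. recfn n g"
      "\<forall>xs. length xs = n \<longrightarrow> map (\<lambda>g. g xs) gs' = map (\<lambda>g. g xs) gs" by auto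
    moreover obtain g' where "recfn n g'" "\<forall>xs. length xs = n \<longrightarrow> g' xs = g xs"
      using Cons.prems unfolding recursive_on_def by auto
    ultimately show ?case by (intro exI[of _ "g' # gs'"]) auto
  qed simp
  then obtain gs' where gs': "length gs' = m" "\<forall>g\<in>set gs'. recfn n g"
    "\<forall>xs. length xs = n \<longrightarrow> map (\<lambda>g. g xs) gs' = map (\<lambda>g. g xs) gs"
    using len by auto
  obtain f' where f': "recfn m f'" "\<forall>xs. length xs = m \<longrightarrow> f' xs = f xs"
    using f unfolding recursive_on_def by auto
  have "recfn n (\<lambda>xs. f' (map (\<lambda>g. g xs) gs'))"
    using recfn.rcomp[OF f'(1) gs'(1,2)] .
  moreover have "\<forall>xs. length xs = n \<longrightarrow> f' (map (\<lambda>g. g xs) gs') = f (map (\<lambda>g. g xs) gs)"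
    using gs' f'(2) len by (metis length_map)
  ultimately show ?thesis unfolding recursive_on_def by blast
qed

lemma recursive_on_rec_nat:
  assumes "recursive_on n f" "recursive_on (Suc (Suc n)) g"
  shows "recursive_on (Suc n) (\<lambda>xs. rec_nat (f (tl xs)) (\<lambda>y r. g (r # y # tl xs)) (hd xs))"
proof -
  obtain f' where f': "recfn n f'" "\<forall>xs. length xs = n \<longrightarrow> f' xs = f xs"
    using assms(1) unfolding recursive_on_def by auto
  obtain g' where g': "recfn (Suc (Suc n)) g'" "\<forall>xs. length xs = Suc (Suc n) \<longrightarrow> g' xs = g xs"
    using assms(2) unfolding recursive_on_def by auto
  have "recfn (Suc n) (\<lambda>xs. rec_nat (f' (tl xs)) (\<lambda>y r. g' (r # y # tl xs)) (hd xs))"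
    by (rule recfn.rprim[OF f'(1) g'(1)])
  moreover have "length xs = Suc n \<Longrightarrow> rec_nat (f' (tl xs)) (\<lambda>y r. g' (r # y # tl xs)) (hd xs)
      = rec_nat (f (tl xs)) (\<lambda>y r. g (r # y # tl xs)) (hd xs)" for xs
    using f' g' by auto
  ultimately show ?thesis unfolding recursive_on_def by blast
qed

lemma recursive_on_Least:
  assumes "recursive_on (Suc n) f" "\<And>xs. length xs = n \<Longrightarrow> \<exists>y. f (y # xs) = 0"
  shows "recursive_on n (\<lambda>xs. LEAST y. f (y # xs) = 0)"
proof -
  obtain f' where f': "recfn (Suc n) f'" "\<forall>xs. length xs = Suc n \<longrightarrow> f' xs = f xs"
    using assms(1) unfolding recursive_on_def by auto
  have "recfn n (\<lambda>xs. LEAST y. f' (y # xs) = 0)"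
    by (rule recfn.rmu[OF f'(1)]) (use assms(2) f'(2) in auto)
  moreover have "length xs = n \<Longrightarrow> (LEAST y. f' (y # xs) = 0) = (LEAST y. f (y # xs) = 0)" for xs
    using f'(2) by simp
  ultimately show ?thesis unfolding recursive_on_def by blast
qed

lemma recursive_on_comp1: "recursive1 h \<Longrightarrow> recursive_on n f \<Longrightarrow> recursive_on n (\<lambda>xs. h (f xs))"
  unfolding recursive1_def using recursive_on_comp[of 1 "\<lambda>xs. h (hd xs)" "[f]" n] by simp

lemma recursive_on_comp2:
  "recursive2 h \<Longrightarrow> recursive_on n f \<Longrightarrow> recursive_on n g \<Longrightarrow> recursive_on n (\<lambda>xs. h (f xs) (g xs))"
  unfolding recursive2_def using recursive_on_comp[of 2 "\<lambda>xs. h (xs ! 0) (xs ! 1)" "[f, g]" n]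
  by simp

lemma recursive_on_comp3:
  "recursive3 h \<Longrightarrow> recursive_on n f \<Longrightarrow> recursive_on n g \<Longrightarrow> recursive_on n k
    \<Longrightarrow> recursive_on n (\<lambda>xs. h (f xs) (g xs) (k xs))"
  unfolding recursive3_def
  using recursive_on_comp[of 3 "\<lambda>xs. h (xs ! 0) (xs ! 1) (xs ! 2)" "[f, g, k]" n]
  by (simp add: numeral_3_eq_3)

lemma recursive1_Suc: "recursive1 Suc"
  unfolding recursive1_def by (rule recfn_imp_recursive_on) (rule recfn.rsucc)

lemma recursive_on_const: "recursive_on n (\<lambda>_. c)"
proof (induction c)
  case 0
  show ?case by (rule recfn_imp_recursive_on) (rule recfn.rzero)
next
  case (Suc c)
  from recursive_on_comp1[OF recursive1_Suc this] show ?case .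
qed

lemma recursive1_const: "recursive1 (\<lambda>_. c)"
  unfolding recursive1_def by (rule recursive_on_const)

lemma recursive1_id: "recursive1 (\<lambda>x. x)"
  unfolding recursive1_def
  by (rule recursive_on_cong[OF recursive_on_proj[of 0 1]]) (auto simp: length_Suc_conv)

lemma recursive1_comp: "recursive1 h \<Longrightarrow> recursive1 f \<Longrightarrow> recursive1 (\<lambda>x. h (f x))"
  unfolding recursive1_def[of "\<lambda>x. h (f x)"] using recursive_on_comp1 recursive1_def by auto

lemma recursive1_comp2:
  "recursive2 h \<Longrightarrow> recursive1 f \<Longrightarrow> recursive1 g \<Longrightarrow> recursive1 (\<lambda>x. h (f x) (g x))"
  unfolding recursive1_def[of "\<lambda>x. h (f x) (g x)"] using recursive_on_comp2 recursive1_def by auto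

lemma recursive1_comp3:
  "recursive3 h \<Longrightarrow> recursive1 f \<Longrightarrow> recursive1 g \<Longrightarrow> recursive1 k
    \<Longrightarrow> recursive1 (\<lambda>x. h (f x) (g x) (k x))"
  unfolding recursive1_def[of "\<lambda>x. h (f x) (g x) (k x)"] using recursive_on_comp3 recursive1_def
  by auto

lemma recursive1_rec_nat:
  assumes "recursive2 g"
  shows "recursive1 (rec_nat c (\<lambda>y r. g r y))"
proof -
  have "recursive_on (Suc 0) (\<lambda>xs. rec_nat c (\<lambda>y r. g r y) (hd xs))"
    using recursive_on_rec_nat[OF recursive_on_const, of 0 "\<lambda>xs. g (xs ! 0) (xs ! 1)" c] assms
    by (simp add: recursive2_def numeral_2_eq_2)
  then show ?thesis unfolding recursive1_def by simp
qed

lemma recursive2_rec_nat: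
  assumes "recursive1 f" "recursive3 g"
  shows "recursive2 (\<lambda>x z. rec_nat (f z) (\<lambda>y r. g r y z) x)"
proof -
  have "recursive_on (Suc (Suc 0)) (\<lambda>xs. rec_nat ((\<lambda>xs. f (hd xs)) (tl xs))
      (\<lambda>y r. (\<lambda>xs. g (xs ! 0) (xs ! 1) (xs ! 2)) (r # y # tl xs)) (hd xs))"
    by (rule recursive_on_rec_nat)
      (use assms in \<open>simp_all add: recursive1_def recursive3_def numeral_3_eq_3\<close>)
  then show ?thesis unfolding recursive2_def numeral_2_eq_2
    by (rule recursive_on_cong) (auto simp: length_Suc_conv)
qed

lemma recursive3_if: "recursive3 (\<lambda>c x y. if c = 0 then x else y)"
proof -
  have "recursive_on (Suc (Suc (Suc 0)))
      (\<lambda>xs. rec_nat (tl xs ! 0) (\<lambda>y r. (r # y # tl xs) ! 3) (hd xs))"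
    by (rule recursive_on_rec_nat; rule recursive_on_proj) simp_all
  moreover have "rec_nat x (\<lambda>i r. y) c = (if c = 0 then x else y)" for c x y :: nat
    by (cases c) auto
  ultimately show ?thesis unfolding recursive3_def numeral_3_eq_3
    by (elim recursive_on_cong) (auto simp: length_Suc_conv numeral_2_eq_2)
qed

lemma recursive2_add: "recursive2 (+)"
proof -
  have "recursive3 (\<lambda>r y z. Suc r)"
    unfolding recursive3_def by (rule recursive_on_comp1[OF recursive1_Suc recursive_on_proj]) simp
  from recursive2_rec_nat[OF recursive1_id this]
  have "recursive2 (\<lambda>x z. rec_nat z (\<lambda>y r. Suc r) x)" .
  moreover have "rec_nat z (\<lambda>y r. Suc r) x = x + z" for x z :: nat by (induction x) auto
  ultimately show ?thesis by simp
qed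

lemma recursive2_mult: "recursive2 (*)"
proof -
  have "recursive3 (\<lambda>r y z. r + z)"
    unfolding recursive3_def
    by (rule recursive_on_comp2[OF recursive2_add]; rule recursive_on_proj) simp_all
  from recursive2_rec_nat[OF recursive1_const this]
  have "recursive2 (\<lambda>x z. rec_nat 0 (\<lambda>y r. r + z) x)" .
  moreover have "rec_nat 0 (\<lambda>y r. r + z) x = x * z" for x z :: nat by (induction x) auto
  ultimately show ?thesis by simp
qed

lemma recursive2_diff: "recursive2 (-)"
proof -
  have "recursive2 (\<lambda>r y. y)"
    unfolding recursive2_def by (rule recursive_on_proj) simp
  from recursive1_rec_nat[OF this] have "recursive1 (rec_nat 0 (\<lambda>y r. y))" .
  moreover have "rec_nat 0 (\<lambda>y r. y) = (\<lambda>x. x - 1)"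
  proof
    show "rec_nat 0 (\<lambda>y r. y) x = x - 1" for x :: nat by (cases x) auto
  qed
  ultimately have "recursive1 (\<lambda>x. x - 1)" by simp
  then have "recursive3 (\<lambda>r y z. r - 1)"
    unfolding recursive3_def by (rule recursive_on_comp1[OF _ recursive_on_proj]) simp
  from recursive2_rec_nat[OF recursive1_id this]
  have "recursive2 (\<lambda>x z. rec_nat z (\<lambda>y r. r - 1) x)" .
  moreover have "rec_nat z (\<lambda>y r. r - 1) x = z - x" for x z :: nat by (induction x) auto
  ultimately have "recursive2 (\<lambda>x z. z - x)" by simp
  from recursive_on_comp2[OF this, of 2 "\<lambda>xs. xs ! 1" "\<lambda>xs. xs ! 0"] show ?thesis
    unfolding recursive2_def by (simp add: recursive_on_proj)
qed

lemma recursive1_add: "recursive1 f \<Longrightarrow> recursive1 g \<Longrightarrow> recursive1 (\<lambda>x. f x + g x)"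
  by (rule recursive1_comp2[OF recursive2_add])

lemma recursive1_mult: "recursive1 f \<Longrightarrow> recursive1 g \<Longrightarrow> recursive1 (\<lambda>x. f x * g x)"
  by (rule recursive1_comp2[OF recursive2_mult])

lemma recursive1_diff: "recursive1 f \<Longrightarrow> recursive1 g \<Longrightarrow> recursive1 (\<lambda>x. f x - g x)"
  by (rule recursive1_comp2[OF recursive2_diff])

lemma recursive1_if:
  "recursive1 c \<Longrightarrow> recursive1 f \<Longrightarrow> recursive1 g \<Longrightarrow> recursive1 (\<lambda>x. if c x = 0 then f x else g x)"
  by (rule recursive1_comp3[OF recursive3_if])

lemma recursive1_mod: "recursive1 (\<lambda>x. x mod m)"
proof -
  let ?step = "\<lambda>r. if (Suc r - m) + (m - Suc r) = 0 then 0 else Suc r"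
  have "recursive1 ?step"
    by (intro recursive1_if recursive1_add recursive1_diff recursive1_Suc recursive1_const)
  then have "recursive2 (\<lambda>r y. ?step r)"
    unfolding recursive1_def recursive2_def
    by (rule recursive_on_comp1[OF _ recursive_on_proj, unfolded recursive1_def]) simp
  from recursive1_rec_nat[OF this] have "recursive1 (rec_nat 0 (\<lambda>y r. ?step r))" .
  moreover have "rec_nat 0 (\<lambda>y r. ?step r) = (\<lambda>x. x mod m)"
  proof
    show "rec_nat 0 (\<lambda>y r. ?step r) x = x mod m" for x by (induction x) (auto simp: mod_Suc)
  qed
  ultimately show ?thesis by simp
qed

lemma recursive1_triangle: "recursive1 triangle"
proof -
  have "recursive2 (\<lambda>r y. r + Suc y)"
    unfolding recursive2_def
    by (rule recursive_on_comp2[OF recursive2_add recursive_on_proj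
          recursive_on_comp1[OF recursive1_Suc recursive_on_proj]]) simp_all
  from recursive1_rec_nat[OF this] have "recursive1 (rec_nat 0 (\<lambda>y r. r + Suc y))" .
  moreover have "rec_nat 0 (\<lambda>y r. r + Suc y) = triangle"
  proof
    show "rec_nat 0 (\<lambda>y r. r + Suc y) x = triangle x" for x by (induction x) auto
  qed
  ultimately show ?thesis by simp
qed

lemma mono_triangle: "mono triangle"
  unfolding mono_iff_le_Suc by simp

lemma recursive1_fst_prod_decode: "recursive1 (\<lambda>m. fst (prod_decode m))"
proof -
  \<comment> \<open>\<open>prod_encode (x, y) = triangle (x + y) + x\<close>, so \<open>x + y\<close> is the least \<open>j\<close> with
    \<open>m < triangle (Suc j)\<close>\<close>
  let ?diagonal = "\<lambda>m. LEAST j. Suc m - triangle (Suc j) = 0"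
  have diagonal: "?diagonal (prod_encode (x, y)) = x + y" for x y
  proof (rule Least_equality)
    fix j assume "Suc (prod_encode (x, y)) - triangle (Suc j) = 0"
    then have "triangle (x + y) < triangle (Suc j)" by (simp add: prod_encode_def)
    then show "x + y \<le> j" using monoD[OF mono_triangle, of "Suc j" "x + y"] by linarith
  qed (simp add: prod_encode_def)
  have fst_prod_decode: "fst (prod_decode m) = m - triangle (?diagonal m)" for m
  proof -
    obtain x y where xy: "prod_decode m = (x, y)" by fastforce
    then have "m = prod_encode (x, y)" by (metis prod_decode_inverse)
    then show ?thesis using xy diagonal by (simp add: prod_encode_def)
  qed
  have "recursive_on (Suc 1) (\<lambda>xs. Suc (xs ! 1) - triangle (Suc (xs ! 0)))"
    by (intro recursive_on_comp2[OF recursive2_diff] recursive_on_comp1[OF recursive1_Suc]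
        recursive_on_comp1[OF recursive1_triangle] recursive_on_proj) simp_all
  then have "recursive_on 1 (\<lambda>xs. LEAST y. Suc ((y # xs) ! 1) - triangle (Suc ((y # xs) ! 0)) = 0)"
  proof (rule recursive_on_Least)
    fix xs :: "nat list"
    show "\<exists>y. Suc ((y # xs) ! 1) - triangle (Suc ((y # xs) ! 0)) = 0"
      by (rule exI[of _ "xs ! 0"]) simp
  qed
  then have "recursive1 ?diagonal"
    unfolding recursive1_def by (rule recursive_on_cong) (auto simp: length_Suc_conv)
  from recursive1_diff[OF recursive1_id recursive1_comp[OF recursive1_triangle this]]
  show ?thesis unfolding fst_prod_decode .
qed

section \<open>Situations as numerals\<close>

lemma enc_sit_append: "enc_sit (w @ t) = enc_sit w + 2 ^ length w * enc_sit t"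
  by (induction w) (auto simp: algebra_simps)

lemma enc_sit_bounds: "2 ^ length s \<le> enc_sit s + 1" "enc_sit s + 2 \<le> 2 * 2 ^ length s"
  by (induction s) auto

lemma inj_enc_sit: "inj enc_sit"
proof
  show "enc_sit s = enc_sit t \<Longrightarrow> s = t" for s t
  proof (induction s arbitrary: t)
    case Nil
    then show ?case by (cases t) (auto split: if_splits)
  next
    case (Cons a s)
    then obtain b t' where t: "t = b # t'" by (cases t) (auto split: if_splits)
    with Cons.prems have "a = b" "enc_sit s = enc_sit t'" by (auto split: if_splits) presburger+
    with Cons.IH t show ?case by simp
  qed
qed

lemma mod_eq_imp_eq_nat:
  fixes x y m :: nat
  assumes "x mod m = y mod m" "x < y + m" "y < x + m"
  shows "x = y"
proof -
  have "a = b" if "a \<le> b" "a mod m = b mod m" "b < a + m" for a b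
  proof -
    have "m dvd b - a" using that(1,2) mod_eq_dvd_iff_nat by metis
    moreover have "b - a < m" using that(1,3) by linarith
    ultimately have "b - a = 0" using nat_dvd_not_less by blast
    with that(1) show "a = b" by simp
  qed
  from this[of x y] this[of y x] assms show ?thesis by (cases "x \<le> y") simp_all
qed

definition extends :: "bool list \<Rightarrow> bool list \<Rightarrow> bool" where
  "extends w s \<longleftrightarrow> (\<exists>t. s = w @ t)"

(* enc_sit reads a situation as a bijective base-2 numeral whose first bit is least significant. *)
lemma extends_iff_enc_sit:
  "extends w s \<longleftrightarrow> enc_sit w \<le> enc_sit s \<and> 2 ^ length w dvd enc_sit s - enc_sit w"
proof
  assume "extends w s"
  then show "enc_sit w \<le> enc_sit s \<and> 2 ^ length w dvd enc_sit s - enc_sit w"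
    by (auto simp: extends_def enc_sit_append)
next
  assume enc: "enc_sit w \<le> enc_sit s \<and> 2 ^ length w dvd enc_sit s - enc_sit w"
  let ?B = "2 ^ length w :: nat" and ?u = "take (length w) s" and ?v = "drop (length w) s"
  have "length w \<le> length s"
  proof (rule ccontr)
    assume "\<not> length w \<le> length s"
    then have "2 * 2 ^ length s \<le> ?B"
      using power_increasing[of "Suc (length s)" "length w" "2::nat"] by simp
    with enc enc_sit_bounds[of w] enc_sit_bounds[of s] show False by linarith
  qed
  then have u: "length ?u = length w" by simp
  have s: "enc_sit s = enc_sit ?u + ?B * enc_sit ?v"
    using enc_sit_append[of ?u ?v] u by simp
  obtain k where "enc_sit s - enc_sit w = ?B * k" using enc by (elim conjE dvdE)
  with s enc have sum: "enc_sit ?u + ?B * enc_sit ?v = enc_sit w + ?B * k" by linarith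
  have "enc_sit ?u mod ?B = (enc_sit ?u + ?B * enc_sit ?v) mod ?B" by simp
  also have "\<dots> = enc_sit w mod ?B" unfolding sum by simp
  finally have "enc_sit ?u = enc_sit w"
    by (rule mod_eq_imp_eq_nat)
      (use enc_sit_bounds[of w] enc_sit_bounds[of ?u, unfolded u] in linarith)+
  then have "?u = w" using inj_enc_sit by (simp add: inj_eq)
  then show "extends w s" unfolding extends_def by (metis append_take_drop_id)
qed

lemma extends_append: "extends w s \<Longrightarrow> extends w (s @ t)"
  unfolding extends_def by auto

lemma extends_snoc_iff: "extends w (s @ [x]) \<longleftrightarrow> extends w s \<or> w = s @ [x]"
  unfolding extends_def
proof
  assume "\<exists>t. s @ [x] = w @ t"
  then obtain t where t: "s @ [x] = w @ t" by blast
  show "(\<exists>t. s = w @ t) \<or> w = s @ [x]"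
  proof (cases t rule: rev_cases)
    case Nil
    with t show ?thesis by simp
  next
    case (snoc t' y)
    with t show ?thesis by auto
  qed
qed auto

lemma length_prefix [simp]: "length (prefix \<omega> n) = n"
  unfolding prefix_def by simp

lemma extends_prefix: "N \<le> n \<Longrightarrow> extends (prefix \<omega> N) (prefix \<omega> n)"
  unfolding extends_def prefix_def by (metis le_Suc_ex map_append upt_add_eq_append zero_le)

section \<open>Decidable predicates and effective real maps\<close>

definition decidable :: "('d \<Rightarrow> nat) \<Rightarrow> ('d \<Rightarrow> bool) \<Rightarrow> bool" where
  "decidable E P \<longleftrightarrow> recursive_nat E (\<lambda>d. of_bool (P d))"

lemma recursive_nat_iff_recursive1:
  "recursive_nat E f \<longleftrightarrow> (\<exists>h. recursive1 h \<and> (\<forall>d. f d = h (E d)))"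
proof
  assume "recursive_nat E f"
  then obtain g where g: "recfn 1 g" "\<forall>d. f d = g [E d]" unfolding recursive_nat_def by auto
  have "recursive_on 1 (\<lambda>xs. g [hd xs])"
    by (rule recursive_on_cong[OF recfn_imp_recursive_on[OF g(1)]]) (auto simp: length_Suc_conv)
  with g(2) show "\<exists>h. recursive1 h \<and> (\<forall>d. f d = h (E d))"
    unfolding recursive1_def by (intro exI[of _ "\<lambda>x. g [x]"]) simp
next
  assume "\<exists>h. recursive1 h \<and> (\<forall>d. f d = h (E d))"
  then obtain h g where "\<forall>d. f d = h (E d)" "recfn 1 g" "\<forall>xs. length xs = 1 \<longrightarrow> g xs = h (hd xs)"
    unfolding recursive1_def recursive_on_def by auto
  then show "recursive_nat E f" unfolding recursive_nat_def by (intro exI[of _ g]) simp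
qed

lemma recursive_nat_const: "recursive_nat E (\<lambda>_. c)"
  unfolding recursive_nat_iff_recursive1 using recursive1_const by blast

lemma recursive_nat_if:
  assumes "decidable E P" "recursive_nat E a" "recursive_nat E b"
  shows "recursive_nat E (\<lambda>d. if P d then a d else b d)"
proof -
  obtain hP ha hb where h: "recursive1 hP" "recursive1 ha" "recursive1 hb"
    and eq: "\<forall>d. of_bool (P d) = hP (E d)" "\<forall>d. a d = ha (E d)" "\<forall>d. b d = hb (E d)"
    using assms unfolding decidable_def recursive_nat_iff_recursive1 by metis
  have "recursive1 (\<lambda>x. if hP x = 0 then hb x else ha x)" by (rule recursive1_if[OF h(1,3,2)])
  moreover have "(if P d then a d else b d) = (if hP (E d) = 0 then hb (E d) else ha (E d))" for d
    using eq[rule_format, of d] by (cases "P d") simp_all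
  ultimately show ?thesis unfolding recursive_nat_iff_recursive1 by blast
qed

lemma decidable_extends: "decidable enc_sit (extends w)"
proof -
  let ?test = "\<lambda>x. (enc_sit w - x) + (x - enc_sit w) mod 2 ^ length w"
  have "recursive1 ?test"
    by (intro recursive1_add recursive1_diff recursive1_const recursive1_id
        recursive1_comp[OF recursive1_mod])
  then have "recursive1 (\<lambda>x. if ?test x = 0 then 1 else 0)"
    by (intro recursive1_if recursive1_const)
  moreover have "of_bool (extends w s) = (if ?test (enc_sit s) = 0 then 1 else 0)" for s
  proof -
    have "?test (enc_sit s) = 0 \<longleftrightarrow> extends w s"
      unfolding extends_iff_enc_sit by (simp only: add_is_0 diff_is_0_eq dvd_eq_mod_eq_0)
    then show ?thesis by (simp only: of_bool_def)
  qed
  ultimately show ?thesis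
    unfolding decidable_def recursive_nat_iff_recursive1 by blast
qed

lemma decidable_fst:
  assumes "decidable E P"
  shows "decidable (enc_pair E E') (\<lambda>d. P (fst d))"
proof -
  obtain h where h: "recursive1 h" "\<forall>d. of_bool (P d) = h (E d)"
    using assms unfolding decidable_def recursive_nat_iff_recursive1 by blast
  have "recursive1 (\<lambda>m. h (fst (prod_decode m)))"
    by (rule recursive1_comp[OF h(1) recursive1_fst_prod_decode])
  moreover have "of_bool (P (fst d)) = h (fst (prod_decode (enc_pair E E' d)))" for d
    using h(2) by (cases d) (simp add: enc_pair_def)
  ultimately show ?thesis unfolding decidable_def recursive_nat_iff_recursive1 by blast
qed

lemma recursive_rat_one: "recursive_rat E (\<lambda>_. 1)"
  unfolding recursive_rat_def using recursive_nat_const[of E]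
  by (intro exI[of _ "\<lambda>_. 1"] exI[of _ "\<lambda>_. 0"]) auto

lemma recursive_rat_divide:
  assumes "recursive_rat E q"
  shows "recursive_rat E (\<lambda>d. q d / real (Suc K))"
proof -
  obtain a b c where abc: "recursive_nat E a" "recursive_nat E b" "recursive_nat E c"
    "\<forall>d. q d = (real (a d) - real (b d)) / real (Suc (c d))"
    using assms unfolding recursive_rat_def by blast
  let ?c = "\<lambda>d. c d * Suc K + K"
  have "recursive_nat E ?c"
    using abc(3) recursive1_add recursive1_mult recursive1_const
    unfolding recursive_nat_iff_recursive1 by (metis (no_types, lifting))
  moreover have "q d / real (Suc K) = (real (a d) - real (b d)) / real (Suc (?c d))" for d
  proof -
    have "real (Suc (?c d)) = real (Suc (c d)) * real (Suc K)" by (simp add: algebra_simps)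
    then show ?thesis by (simp only: abc(4)[rule_format] divide_divide_eq_left)
  qed
  ultimately show ?thesis using abc(1,2) unfolding recursive_rat_def by blast
qed

lemma recursive_rat_if:
  assumes "decidable E P" "recursive_rat E q" "recursive_rat E q'"
  shows "recursive_rat E (\<lambda>d. if P d then q d else q' d)"
proof -
  obtain a b c where abc: "recursive_nat E a" "recursive_nat E b" "recursive_nat E c"
    "\<forall>d. q d = (real (a d) - real (b d)) / real (Suc (c d))"
    using assms(2) unfolding recursive_rat_def by blast
  obtain a' b' c' where abc': "recursive_nat E a'" "recursive_nat E b'" "recursive_nat E c'"
    "\<forall>d. q' d = (real (a' d) - real (b' d)) / real (Suc (c' d))"
    using assms(3) unfolding recursive_rat_def by blast
  let ?choose = "\<lambda>f g d. if P d then f d else g d"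
  have "recursive_nat E (?choose a a')" "recursive_nat E (?choose b b')"
    "recursive_nat E (?choose c c')"
    using recursive_nat_if[OF assms(1)] abc abc' by blast+
  moreover have "?choose q q' d
      = (real (?choose a a' d) - real (?choose b b' d)) / real (Suc (?choose c c' d))" for d
    using abc(4) abc'(4) by simp
  ultimately show ?thesis unfolding recursive_rat_def by blast
qed

lemma lower_semicomputable_one: "lower_semicomputable E (\<lambda>_. 1)"
  unfolding lower_semicomputable_def using recursive_rat_one by fastforce

lemma lower_semicomputable_divide:
  assumes "lower_semicomputable E F"
  shows "lower_semicomputable E (\<lambda>d. F d / real (Suc K))"
proof -
  obtain q where q: "recursive_rat (enc_pair E id) q" "\<forall>d n. q (d, n) \<le> q (d, Suc n)"
    "\<forall>d. (\<lambda>n. q (d, n)) \<longlonglongrightarrow> F d"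
    using assms unfolding lower_semicomputable_def by blast
  have "recursive_rat (enc_pair E id) (\<lambda>dn. q dn / real (Suc K))"
    by (rule recursive_rat_divide[OF q(1)])
  moreover have "\<forall>d n. q (d, n) / real (Suc K) \<le> q (d, Suc n) / real (Suc K)"
    using q(2) by (simp add: divide_right_mono)
  moreover have "\<forall>d. (\<lambda>n. q (d, n) / real (Suc K)) \<longlonglongrightarrow> F d / real (Suc K)"
    using q(3) by (auto intro!: tendsto_intros)
  ultimately show ?thesis
    unfolding lower_semicomputable_def by (auto intro!: exI[of _ "\<lambda>dn. q dn / real (Suc K)"])
qed

lemma lower_semicomputable_if:
  assumes "decidable E P" "lower_semicomputable E F" "lower_semicomputable E G"
  shows "lower_semicomputable E (\<lambda>d. if P d then F d else G d)"
proof -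
  obtain q where q: "recursive_rat (enc_pair E id) q" "\<forall>d n. q (d, n) \<le> q (d, Suc n)"
    "\<forall>d. (\<lambda>n. q (d, n)) \<longlonglongrightarrow> F d"
    using assms(2) unfolding lower_semicomputable_def by blast
  obtain q' where q': "recursive_rat (enc_pair E id) q'" "\<forall>d n. q' (d, n) \<le> q' (d, Suc n)"
    "\<forall>d. (\<lambda>n. q' (d, n)) \<longlonglongrightarrow> G d"
    using assms(3) unfolding lower_semicomputable_def by blast
  let ?q = "\<lambda>dn. if P (fst dn) then q dn else q' dn"
  have "recursive_rat (enc_pair E id) ?q"
    by (rule recursive_rat_if[OF decidable_fst[OF assms(1)] q(1) q'(1)])
  moreover have "\<forall>d n. ?q (d, n) \<le> ?q (d, Suc n)" using q(2) q'(2) by simp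
  moreover have "\<forall>d. (\<lambda>n. ?q (d, n)) \<longlonglongrightarrow> (if P d then F d else G d)" using q(3) q'(3) by simp
  ultimately show ?thesis unfolding lower_semicomputable_def by blast
qed

lemma computable_real_divide:
  assumes "computable_real E r"
  shows "computable_real E (\<lambda>d. r d / real (Suc K))"
proof -
  obtain q where q: "recursive_rat (enc_pair E id) q" "\<forall>d n. \<bar>r d - q (d, n)\<bar> < 1 / 2 ^ n"
    using assms unfolding computable_real_def by blast
  have "\<bar>r d / real (Suc K) - q (d, n) / real (Suc K)\<bar> < 1 / 2 ^ n" for d n
  proof -
    have "\<bar>r d / real (Suc K) - q (d, n) / real (Suc K)\<bar> = \<bar>r d - q (d, n)\<bar> / real (Suc K)"
      by (simp add: diff_divide_distrib[symmetric])
    also have "\<dots> \<le> \<bar>r d - q (d, n)\<bar> / 1" by (intro divide_left_mono) auto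
    also have "\<dots> < 1 / 2 ^ n" using q(2) by simp
    finally show ?thesis .
  qed
  with recursive_rat_divide[OF q(1)] show ?thesis
    unfolding computable_real_def by fastforce
qed

lemma growth_function_divide:
  assumes "growth_function \<tau>"
  shows "growth_function (\<lambda>n. \<tau> n / real (Suc K))"
  unfolding growth_function_def
proof (intro conjI allI)
  show "computable_real id (\<lambda>n. \<tau> n / real (Suc K))"
    by (rule computable_real_divide) (use assms in \<open>simp add: growth_function_def\<close>)
  show "mono (\<lambda>n. \<tau> n / real (Suc K))"
    using assms unfolding growth_function_def mono_def by (simp add: divide_right_mono)
  show "0 \<le> \<tau> n / real (Suc K)" for n
    using assms unfolding growth_function_def by simp
  show "\<not> bdd_above (range (\<lambda>n. \<tau> n / real (Suc K)))"
  proof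
    assume "bdd_above (range (\<lambda>n. \<tau> n / real (Suc K)))"
    then obtain M where "\<And>n. \<tau> n / real (Suc K) \<le> M" by (auto simp: bdd_above_def)
    then have "\<And>n. \<tau> n \<le> M * real (Suc K)" by (simp add: divide_le_eq)
    then have "bdd_above (range \<tau>)" by (auto simp: bdd_above_def)
    with assms show False unfolding growth_function_def by blast
  qed
qed

section \<open>Upper expectations\<close>

lemma Ex_r_le_max: "p \<le> r \<Longrightarrow> r \<le> q \<Longrightarrow> Ex_r r f \<le> max (Ex_r p f) (Ex_r q f)"
proof -
  assume r: "p \<le> r" "r \<le> q"
  have affine: "Ex_r s f = f False + s * (f True - f False)" for s
    unfolding Ex_r_def by (simp add: algebra_simps)
  show ?thesis
  proof (cases "f False \<le> f True")
    case True
    then have "r * (f True - f False) \<le> q * (f True - f False)"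
      using r by (intro mult_right_mono) auto
    then show ?thesis unfolding affine by auto
  next
    case False
    then have "r * (f True - f False) \<le> p * (f True - f False)"
      using r by (intro mult_right_mono_neg) auto
    then show ?thesis unfolding affine by auto
  qed
qed

lemma Eup_nonpos_iff: "p \<le> q \<Longrightarrow> Eup (p, q) f \<le> 0 \<longleftrightarrow> Ex_r p f \<le> 0 \<and> Ex_r q f \<le> 0"
proof -
  assume "p \<le> q"
  have bdd: "bdd_above ((\<lambda>r. Ex_r r f) ` {p..q})"
    by (rule bdd_aboveI[of _ "max (Ex_r p f) (Ex_r q f)"]) (auto intro: Ex_r_le_max)
  have "Ex_r r f \<le> Eup (p, q) f" if "r \<in> {p, q}" for r
    unfolding Eup_def using \<open>p \<le> q\<close> that by (auto intro!: cSup_upper[OF _ bdd])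
  moreover have "Eup (p, q) f \<le> 0" if hp: "Ex_r p f \<le> 0" and hq: "Ex_r q f \<le> 0"
  proof -
    have "Ex_r r f \<le> 0" if "p \<le> r" "r \<le> q" for r
      using Ex_r_le_max[OF that, of f] hp hq by linarith
    then show ?thesis unfolding Eup_def using \<open>p \<le> q\<close> by (intro cSup_least) auto
  qed
  ultimately show ?thesis by fastforce
qed

lemma Eup_point: "Eup (r, r) f = Ex_r r f"
  unfolding Eup_def by simp

lemma supermartingale_phi_pq:
  assumes "p \<le> q" "supermartingale (\<lambda>_. (p, q)) T"
  shows "supermartingale (phi_pq \<pi> p q) T"
  using assms Eup_nonpos_iff unfolding supermartingale_def phi_pq_def by (simp add: Eup_point)

lemma Tbar_pq_subset_phi_pq: "p \<le> q \<Longrightarrow> Tbar R (\<lambda>_. (p, q)) \<subseteq> Tbar R (phi_pq \<pi> p q)"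
  unfolding Tbar_def using supermartingale_phi_pq by blast

section \<open>Restarting a test supermartingale\<close>

definition restart :: "bool list \<Rightarrow> real \<Rightarrow> (bool list \<Rightarrow> real) \<Rightarrow> bool list \<Rightarrow> real" where
  "restart w c T s = (if extends w s then T s / c else 1)"

lemma restart_prefix: "N \<le> n \<Longrightarrow> restart (prefix \<omega> N) c T (prefix \<omega> n) = T (prefix \<omega> n) / c"
  unfolding restart_def using extends_prefix by auto

lemma restart_test_process:
  assumes "\<And>s. 0 \<le> T s" "0 < c" "w \<noteq> []"
  shows "test_process (restart w c T)"
  using assms unfolding test_process_def restart_def extends_def by auto

lemma restart_supermartingale:
  assumes "0 \<le> p" "p \<le> q" "q \<le> 1" "0 < c" "T w \<le> c"
    and after_w: "\<And>t. length w \<le> length t \<Longrightarrow> Eup (p, q) (dproc T t) \<le> 0"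
  shows "supermartingale (\<lambda>_. (p, q)) (restart w c T)"
  unfolding supermartingale_def
proof
  fix s
  show "Eup (p, q) (dproc (restart w c T) s) \<le> 0"
  proof (cases "extends w s")
    case True
    then have "dproc (restart w c T) s = (\<lambda>x. dproc T s x / c)"
      unfolding dproc_def restart_def by (auto simp: extends_append diff_divide_distrib)
    moreover have "Ex_r r (\<lambda>x. dproc T s x / c) = Ex_r r (dproc T s) / c" for r
      unfolding Ex_r_def by (simp add: add_divide_distrib)
    moreover have "length w \<le> length s" using True unfolding extends_def by auto
    ultimately show ?thesis
      using after_w assms(2,4) by (simp add: Eup_nonpos_iff divide_nonpos_pos)
  next
    case False
    then have "dproc (restart w c T) s x \<le> 0" for x
      using assms(4,5) unfolding dproc_def restart_def extends_snoc_iff by auto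
    then have "Ex_r r (dproc (restart w c T) s) \<le> 0" if "0 \<le> r" "r \<le> 1" for r
      unfolding Ex_r_def using that by (simp add: add_nonpos_nonpos mult_nonneg_nonpos)
    with assms(1-3) show ?thesis by (simp add: Eup_nonpos_iff)
  qed
qed

lemma restart_in_F_ML:
  assumes "T \<in> F_ML" "w \<noteq> []"
  shows "restart w (real (Suc K)) T \<in> F_ML"
proof -
  have "lower_semicomputable enc_sit (\<lambda>s. if extends w s then T s / real (Suc K) else 1)"
    using assms(1) unfolding F_ML_def
    by (intro lower_semicomputable_if decidable_extends lower_semicomputable_divide
        lower_semicomputable_one) simp
  moreover have "test_process (restart w (real (Suc K)) T)"
    by (rule restart_test_process) (use assms in \<open>auto simp: F_ML_def test_process_def\<close>)
  ultimately show ?thesis unfolding F_ML_def restart_def[abs_def] by simp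
qed

lemma restart_in_F_C:
  assumes "T \<in> F_C" "w \<noteq> []"
  shows "restart w (real (Suc K)) T \<in> F_C"
proof -
  have "recursive_rat enc_sit (\<lambda>s. if extends w s then T s / real (Suc K) else 1)"
    using assms(1) unfolding F_C_def
    by (intro recursive_rat_if decidable_extends recursive_rat_divide recursive_rat_one) simp
  moreover have "test_process (restart w (real (Suc K)) T)"
    by (rule restart_test_process) (use assms in \<open>auto simp: F_C_def test_process_def\<close>)
  moreover have "0 < restart w (real (Suc K)) T s" for s
    using assms(1) unfolding F_C_def restart_def by simp
  ultimately show ?thesis unfolding F_C_def restart_def[abs_def] by simp
qed

lemma restart_in_Fset:
  "R \<noteq> R_wML \<Longrightarrow> T \<in> Fset R \<Longrightarrow> w \<noteq> [] \<Longrightarrow> restart w (real (Suc K)) T \<in> Fset R"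
  by (cases R) (auto intro: restart_in_F_ML restart_in_F_C simp del: of_nat_Suc)

lemma generated_snoc: "generated D (s @ [x]) = generated D s * D s x"
proof -
  have "generated D (s @ [x]) = (\<Prod>k<length s. D (take k (s @ [x])) ((s @ [x]) ! k)) * D s x"
    unfolding generated_def by (simp add: nth_append)
  also have "(\<Prod>k<length s. D (take k (s @ [x])) ((s @ [x]) ! k)) = generated D s"
    unfolding generated_def by (rule prod.cong) (auto simp: nth_append)
  finally show ?thesis .
qed

lemma generated_restart:
  assumes "w \<noteq> []" "0 < generated D w"
  shows "generated (\<lambda>u x. if extends w u then D u x else 1) s
    = restart w (generated D w) (generated D) s"
proof (induction s rule: rev_induct)
  case Nil
  then show ?case using assms(1) unfolding restart_def extends_def generated_def by simp
next
  case (snoc x s)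
  then show ?case
    using assms(2) unfolding restart_def extends_snoc_iff by (auto simp: generated_snoc)
qed

lemma restart_in_F_wML:
  assumes "T \<in> F_wML" "w \<noteq> []" "0 < T w"
  shows "restart w (T w) T \<in> F_wML"
proof -
  obtain D where D: "T = generated D" "\<And>s x. 0 \<le> D s x"
    "lower_semicomputable (enc_pair enc_sit enc_bool) (\<lambda>(s, x). D s x)"
    using assms(1) unfolding F_wML_def by blast
  let ?D = "\<lambda>u x. if extends w u then D u x else 1"
  have "lower_semicomputable (enc_pair enc_sit enc_bool)
      (\<lambda>d. if extends w (fst d) then (\<lambda>(s, x). D s x) d else 1)"
    by (intro lower_semicomputable_if decidable_fst decidable_extends D(3)
        lower_semicomputable_one)
  moreover have "(\<lambda>d. if extends w (fst d) then (\<lambda>(s, x). D s x) d else 1) = (\<lambda>(s, x). ?D s x)"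
    by (auto simp: fun_eq_iff)
  ultimately have "lower_semicomputable (enc_pair enc_sit enc_bool) (\<lambda>(s, x). ?D s x)"
    by simp
  moreover have "restart w (T w) T = generated ?D"
    using generated_restart[OF assms(2)] assms(3) unfolding D(1) by auto
  ultimately show ?thesis unfolding F_wML_def using D(2) by auto
qed

section \<open>Selection along the forecast path\<close>

lemma count_tendsto_at_top:
  assumes "infinite {k. A k}"
  shows "filterlim (\<lambda>n. \<Sum>k<n. of_bool (A k) :: real) at_top sequentially"
  unfolding filterlim_at_top
proof
  fix Z :: real
  obtain B where B: "finite B" "card B = nat \<lceil>Z\<rceil>" "B \<subseteq> {k. A k}"
    using infinite_arbitrarily_large[OF assms] by blast
  obtain n0 where n0: "B \<subseteq> {..<n0}" using finite_nat_bounded[OF B(1)] by blast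
  have "Z \<le> (\<Sum>k<n. of_bool (A k))" if "n0 \<le> n" for n
  proof -
    have "(\<Sum>k<n. of_bool (A k) :: real) = real (card ({..<n} \<inter> {k. A k}))"
      by (simp add: sum_of_bool_eq)
    moreover have "card B \<le> card ({..<n} \<inter> {k. A k})"
      using n0 B(3) that by (intro card_mono) auto
    ultimately show ?thesis using B(2) by linarith
  qed
  then show "eventually (\<lambda>n. Z \<le> (\<Sum>k<n. of_bool (A k))) sequentially"
    unfolding eventually_sequentially by blast
qed

lemma selected_average_tendsto:
  assumes "filterlim (\<lambda>n. \<Sum>k<n. of_bool (A k) :: real) at_top sequentially"
    and "\<And>k. A k \<Longrightarrow> g k = v"
  shows "(\<lambda>n. ereal ((\<Sum>k<n. of_bool (A k) * g k) / (\<Sum>k<n. of_bool (A k)))) \<longlonglongrightarrow> ereal v"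
proof (rule Lim_transform_eventually[OF tendsto_const])
  have numerator: "(\<Sum>k<n. of_bool (A k) * g k) = v * (\<Sum>k<n. of_bool (A k))" for n
    unfolding sum_distrib_left by (rule sum.cong) (auto simp: assms(2))
  have "eventually (\<lambda>n. 1 \<le> (\<Sum>k<n. of_bool (A k) :: real)) sequentially"
    using assms(1) unfolding filterlim_at_top by blast
  then show "eventually (\<lambda>n. ereal v
      = ereal ((\<Sum>k<n. of_bool (A k) * g k) / (\<Sum>k<n. of_bool (A k)))) sequentially"
    by eventually_elim (metis numerator nonzero_mult_div_cancel_right not_one_le_zero)
qed

lemma sel_random_constant_selection:
  assumes "sel_random \<SS> (\<lambda>_. I) \<pi>" "Sel \<in> \<SS>" "infinite {k. Sel (prefix \<pi> k)}"
    and "\<And>k. Sel (prefix \<pi> k) \<Longrightarrow> \<pi> k = b"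
  shows "fst I \<le> of_bool b \<and> of_bool b \<le> snd I"
proof -
  let ?A = "\<lambda>k. Sel (prefix \<pi> k)"
  let ?average =
    "\<lambda>r n. ereal ((\<Sum>k<n. of_bool (?A k) * (of_bool (\<pi> k) - r)) / (\<Sum>k<n. of_bool (?A k)))"
  have count: "filterlim (\<lambda>n. \<Sum>k<n. of_bool (?A k) :: real) at_top sequentially"
    by (rule count_tendsto_at_top[OF assms(3)])
  have average: "?average r \<longlonglongrightarrow> ereal (of_bool b - r)" for r
    by (rule selected_average_tendsto[OF count]) (simp add: assms(4))
  have "0 \<le> liminf (?average (fst I))" "limsup (?average (snd I)) \<le> 0"
    using assms(1,2) count unfolding sel_random_def by auto
  moreover have "liminf (?average (fst I)) = ereal (of_bool b - fst I)"
    by (intro lim_imp_Liminf average) simp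
  moreover have "limsup (?average (snd I)) = ereal (of_bool b - snd I)"
    by (intro lim_imp_Limsup average) simp
  ultimately show ?thesis by simp
qed

lemma phi_pq_supermartingale_eventually_pq:
  assumes "T \<in> Fset R" "supermartingale (phi_pq \<pi> p q) T" "p \<le> q"
    and "sel_pq p q (Fset R) \<subseteq> \<SS>" "sel_random \<SS> (\<lambda>_. I) \<pi>" "0 < fst I" "snd I < 1"
  obtains N where "\<And>t. N \<le> length t \<Longrightarrow> Eup (p, q) (dproc T t) \<le> 0"
proof -
  have selected:
    "sel_temporal r T (prefix \<pi> k) \<longleftrightarrow> (\<exists>t. length t = k \<and> 0 < Ex_r r (dproc T t))" for r k
    unfolding sel_temporal_def by simp
  have in_\<SS>: "sel_temporal p T \<in> \<SS>" "sel_temporal q T \<in> \<SS>"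
    using assms(1,4) unfolding sel_pq_def by blast+
  have phi: "Ex_r (if \<pi> (length t) then q else p) (dproc T t) \<le> 0" for t
    using assms(2) unfolding supermartingale_def phi_pq_def by (metis Eup_point)
  have "finite {k. sel_temporal r T (prefix \<pi> k)}" if "r \<in> {p, q}" for r
  proof (rule ccontr)
    assume "infinite {k. sel_temporal r T (prefix \<pi> k)}"
    \<comment> \<open>where \<open>phi\<close> forecasts \<open>r\<close> itself, no situation gains in expectation under \<open>r\<close>\<close>
    moreover have "\<pi> k = (r = p)" if "sel_temporal r T (prefix \<pi> k)" for k
      using that phi \<open>r \<in> {p, q}\<close> unfolding selected by (metis insert_iff not_le singletonD)
    ultimately have "fst I \<le> of_bool (r = p) \<and> of_bool (r = p) \<le> snd I"
      using sel_random_constant_selection[OF assms(5)] in_\<SS> \<open>r \<in> {p, q}\<close> by blast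
    with assms(6,7) show False by (cases "r = p") auto
  qed
  then have "finite ({k. sel_temporal p T (prefix \<pi> k)} \<union> {k. sel_temporal q T (prefix \<pi> k)})"
    by simp
  then obtain N
    where "{k. sel_temporal p T (prefix \<pi> k)} \<union> {k. sel_temporal q T (prefix \<pi> k)} \<subseteq> {..<N}"
    using finite_nat_bounded by blast
  then have "Eup (p, q) (dproc T t) \<le> 0" if "N \<le> length t" for t
    using that assms(3) unfolding Eup_nonpos_iff[OF assms(3)] selected by (force simp: not_less)
  then show ?thesis using that by blast
qed

section \<open>Transfer of winning tests\<close>

lemma exists_restarted_pq_test:
  assumes "T \<in> Fset R" "0 \<le> p" "p \<le> q" "q \<le> 1"
    and after_N: "\<And>t. N \<le> length t \<Longrightarrow> Eup (p, q) (dproc T t) \<le> 0"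
    and "\<exists>\<^sub>F n in sequentially. 0 < T (prefix \<omega> n)"
  obtains n0 c where "restart (prefix \<omega> n0) c T \<in> Tbar R (\<lambda>_. (p, q))" "0 < c"
    "R \<noteq> R_wML \<Longrightarrow> \<exists>K. c = real (Suc K)"
proof (cases "R = R_wML")
  case False
  let ?w = "prefix \<omega> (Suc N)"
  let ?c = "real (Suc (nat \<lceil>T ?w\<rceil>))"
  have "restart ?w ?c T \<in> Fset R"
    by (rule restart_in_Fset[OF False assms(1)]) (simp add: prefix_def)
  moreover have "supermartingale (\<lambda>_. (p, q)) (restart ?w ?c T)"
    by (rule restart_supermartingale)
      (use assms(2-4) after_N in \<open>auto intro: of_nat_ceiling order.trans\<close>)
  ultimately show ?thesis using that[of "Suc N" ?c] unfolding Tbar_def by simp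
next
  case True
  obtain n0 where n0: "Suc N \<le> n0" "0 < T (prefix \<omega> n0)"
    using assms(6) unfolding frequently_sequentially by blast
  let ?w = "prefix \<omega> n0"
  have "restart ?w (T ?w) T \<in> Fset R"
    using restart_in_F_wML assms(1) n0 True by (auto simp: prefix_def)
  moreover have "supermartingale (\<lambda>_. (p, q)) (restart ?w (T ?w) T)"
    by (rule restart_supermartingale) (use assms(2-4) after_N n0 in auto)
  ultimately show ?thesis using that[of n0 "T ?w"] n0(2) True unfolding Tbar_def by simp
qed

lemma limsup_eventually_divide:
  assumes "0 < c" "eventually (\<lambda>n. g n = f n / c) sequentially"
  shows "limsup (\<lambda>n. ereal (g n)) = ereal (1 / c) * limsup (\<lambda>n. ereal (f n))"
proof -
  have "limsup (\<lambda>n. ereal (g n)) = limsup (\<lambda>n. ereal (1 / c) * ereal (f n))"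
    using assms(2) by (intro Limsup_eq) (auto elim: eventually_mono)
  also have "\<dots> = ereal (1 / c) * limsup (\<lambda>n. ereal (f n))"
    using assms(1) by (intro limsup_ereal_mult_left) simp
  finally show ?thesis .
qed

definition wins :: "rtype \<Rightarrow> (bool list \<Rightarrow> real) \<Rightarrow> (nat \<Rightarrow> bool) \<Rightarrow> bool" where
  "wins R T \<omega> \<longleftrightarrow> (if R = R_S
     then \<exists>\<tau>. growth_function \<tau> \<and> 0 \<le> limsup (\<lambda>n. ereal (T (prefix \<omega> n) - \<tau> n))
     else limsup (\<lambda>n. ereal (T (prefix \<omega> n))) = \<infinity>)"

lemma random_iff_no_winning_test: "random R \<phi> \<omega> \<longleftrightarrow> \<not> (\<exists>T\<in>Tbar R \<phi>. wins R T \<omega>)"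
  by (cases "R = R_S") (simp_all add: random_def wins_def)

lemma wins_frequently_pos:
  assumes "T \<in> Fset R" "wins R T \<omega>"
  shows "\<exists>\<^sub>F n in sequentially. 0 < T (prefix \<omega> n)"
proof (cases "R = R_S")
  case True
  then show ?thesis using assms(1) by (simp add: F_C_def frequently_sequentially) blast
next
  case False
  have "\<not> eventually (\<lambda>n. ereal (T (prefix \<omega> n)) \<le> 0) sequentially"
  proof
    assume "eventually (\<lambda>n. ereal (T (prefix \<omega> n)) \<le> 0) sequentially"
    then have "limsup (\<lambda>n. ereal (T (prefix \<omega> n))) \<le> 0" by (rule Limsup_bounded)
    with assms(2) False show False unfolding wins_def by simp
  qed
  then show ?thesis by (simp add: not_eventually not_le)
qed

lemma wins_restart:
  assumes "wins R T \<omega>" "0 < c" "R = R_S \<Longrightarrow> \<exists>K. c = real (Suc K)"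
  shows "wins R (restart (prefix \<omega> n0) c T) \<omega>"
proof -
  have scaled: "limsup (\<lambda>n. ereal (restart (prefix \<omega> n0) c T (prefix \<omega> n) - h n / c))
      = ereal (1 / c) * limsup (\<lambda>n. ereal (T (prefix \<omega> n) - h n))" for h
  proof (rule limsup_eventually_divide[OF assms(2)])
    have "restart (prefix \<omega> n0) c T (prefix \<omega> n) - h n / c = (T (prefix \<omega> n) - h n) / c"
      if "n0 \<le> n" for n
      using that by (simp add: restart_prefix diff_divide_distrib)
    then show "eventually (\<lambda>n. restart (prefix \<omega> n0) c T (prefix \<omega> n) - h n / c
        = (T (prefix \<omega> n) - h n) / c) sequentially"
      unfolding eventually_sequentially by blast
  qed
  show ?thesis
  proof (cases "R = R_S")
    case True
    obtain \<tau> where \<tau>: "growth_function \<tau>" "0 \<le> limsup (\<lambda>n. ereal (T (prefix \<omega> n) - \<tau> n))"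
      using assms(1) True unfolding wins_def by auto
    obtain K where K: "c = real (Suc K)" using assms(3) True by auto
    have "growth_function (\<lambda>n. \<tau> n / c)"
      unfolding K by (rule growth_function_divide[OF \<tau>(1)])
    moreover have "0 \<le> limsup (\<lambda>n. ereal (restart (prefix \<omega> n0) c T (prefix \<omega> n) - \<tau> n / c))"
      unfolding scaled using assms(2) \<tau>(2) by (simp add: ereal_zero_le_0_iff)
    ultimately show ?thesis unfolding wins_def True by auto
  next
    case False
    then show ?thesis
      using scaled[of "\<lambda>_. 0"] assms(1,2) unfolding wins_def by simp
  qed
qed

lemma winning_phi_pq_test_imp_winning_pq_test:
  assumes "0 \<le> p" "p \<le> q" "q \<le> 1" "0 < fst I" "snd I < 1"
    and "sel_pq p q (Fset R) \<subseteq> \<SS>" "sel_random \<SS> (\<lambda>_. I) \<pi>"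
    and T: "T \<in> Tbar R (phi_pq \<pi> p q)" "wins R T \<omega>"
  shows "\<exists>T'\<in>Tbar R (\<lambda>_. (p, q)). wins R T' \<omega>"
proof -
  obtain N where "\<And>t. N \<le> length t \<Longrightarrow> Eup (p, q) (dproc T t) \<le> 0"
    using phi_pq_supermartingale_eventually_pq T(1) assms(2,4-7) unfolding Tbar_def by blast
  moreover have "\<exists>\<^sub>F n in sequentially. 0 < T (prefix \<omega> n)"
    using wins_frequently_pos T unfolding Tbar_def by blast
  ultimately obtain n0 c where T': "restart (prefix \<omega> n0) c T \<in> Tbar R (\<lambda>_. (p, q))"
    and c: "0 < c" "R \<noteq> R_wML \<Longrightarrow> \<exists>K. c = real (Suc K)"
    using exists_restarted_pq_test T(1) assms(1-3) unfolding Tbar_def by blast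
  have "wins R (restart (prefix \<omega> n0) c T) \<omega>"
    by (rule wins_restart[OF T(2) c(1)]) (use c(2) in auto)
  with T' show ?thesis by blast
qed

theorem theorem29:
  fixes R :: rtype and p q :: real and I :: "real \<times> real"
    and \<SS> :: "(bool list \<Rightarrow> bool) set" and \<pi> \<omega> :: "nat \<Rightarrow> bool"
  assumes "0 \<le> p" and "p < q" and "q \<le> 1"
    and "0 < fst I" and "fst I \<le> snd I" and "snd I < 1"
    and "countable \<SS>"
    and "sel_pq p q (Fset R) \<subseteq> \<SS>"
    and "sel_random \<SS> (\<lambda>_. I) \<pi>"
  shows "random R (phi_pq \<pi> p q) \<omega> \<longleftrightarrow> random R (\<lambda>_. (p, q)) \<omega>"
proof -
  have "p \<le> q" using assms(2) by simp
  then have "Tbar R (\<lambda>_. (p, q)) \<subseteq> Tbar R (phi_pq \<pi> p q)" by (rule Tbar_pq_subset_phi_pq)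
  moreover have "\<exists>T'\<in>Tbar R (\<lambda>_. (p, q)). wins R T' \<omega>"
    if "T \<in> Tbar R (phi_pq \<pi> p q)" "wins R T \<omega>" for T
    using winning_phi_pq_test_imp_winning_pq_test[OF assms(1) \<open>p \<le> q\<close> assms(3,4,6,8,9) that] .
  ultimately show ?thesis unfolding random_iff_no_winning_test by blast
qed

end
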